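(* For every $\beta > 0$ there exists a constant $C_0 > 0$ such that the following holds. Let $\mathcal{G}$ be a graph on $n$ vertices with maximum degree at most $d$. If $e(\mathcal{G}) \geqslant 4\beta d n$, then for every $C \geqslant C_0$, $$I(\mathcal{G},m) \leqslant \Big( n^{-Cd} + e^{-\beta m}\Big)\binom{n}{m}$$ for every $m \geqslant C\sqrt{n\log n}$.
   Context: $e(\mathcal{G})$ is the number of edges of $\mathcal{G}$ and $I(\mathcal{G},m)$ is the number of independent sets of size $m$ in $\mathcal{G}$. $\log$ is the natural logarithm. *)

theory Defs
  imports Complex_Main
begin

definition simple_graph :: "'a set \<Rightarrow> 'a set set \<Rightarrow> bool" where
  "simple_graph V E \<longleftrightarrow> finite V \<and> (\<forall>e\<in>E. e \<subseteq> V \<and> card e = 2)"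

definition num_edges :: "'a set set \<Rightarrow> nat" where
  "num_edges E = card E"

definition degree :: "'a set set \<Rightarrow> 'a \<Rightarrow> nat" where
  "degree E v = card {e\<in>E. v \<in> e}"

definition max_degree_le :: "'a set \<Rightarrow> 'a set set \<Rightarrow> nat \<Rightarrow> bool" where
  "max_degree_le V E d \<longleftrightarrow> (\<forall>v\<in>V. degree E v \<le> d)"

definition independent_set :: "'a set \<Rightarrow> 'a set set \<Rightarrow> 'a set \<Rightarrow> bool" where
  "independent_set V E S \<longleftrightarrow> S \<subseteq> V \<and> (\<forall>e\<in>E. \<not> e \<subseteq> S)"

definition num_indep :: "'a set \<Rightarrow> 'a set set \<Rightarrow> nat \<Rightarrow> nat" where
  "num_indep V E m = card {S. independent_set V E S \<and> card S = m}"

end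

theory Submission
  imports Defs
begin

(* Put a = m div 2. An independent m-set contains (m choose a) independent a-sets A, and each A
   extends in at most ((n - a - |N(A)|) choose (m - a)) ways, because the remaining vertices must
   avoid A and its neighbourhood N(A). If |N(A)| >= t this is at most ((n - a) choose (m - a))
   times exp(-t(m-a)/n). The a-sets with |N(A)| < t are rare: while |N(A)| <= 4 beta n, the edge
   bound e(G) >= 4 beta d n leaves at least (7/2) beta n vertices with beta d/2 neighbours outside
   N(A), and adding one of them multiplies the weight exp(-3 |N(A)| / (beta d/2)) by at most e^-3.
   Hence the weight of all such k-sets is at most (n choose k) exp(-3 beta k), and there are at most
   (n choose k) exp(6t/(beta d) - 3 beta k) k-sets with |N(A)| < t. Taking t = 4 beta n when
   d m >= 96 n/beta, and t = beta^2 d a/24 otherwise, makes both error terms small. *)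

definition neighbours :: "'a set set \<Rightarrow> 'a \<Rightarrow> 'a set" where
  "neighbours E v = {w. {v, w} \<in> E}"

definition neighbourhood :: "'a set set \<Rightarrow> 'a set \<Rightarrow> 'a set" where
  "neighbourhood E A = (\<Union>v\<in>A. neighbours E v)"

lemma simple_graph_finite_edges: "simple_graph V E \<Longrightarrow> finite E"
  unfolding simple_graph_def by (meson Pow_iff finite_Pow_iff finite_subset subsetI)

lemma neighbours_subset: "simple_graph V E \<Longrightarrow> neighbours E v \<subseteq> V"
  unfolding simple_graph_def neighbours_def by blast

lemma neighbourhood_subset: "simple_graph V E \<Longrightarrow> neighbourhood E A \<subseteq> V"
  unfolding neighbourhood_def using neighbours_subset[of V E] by blast

lemma finite_neighbours: "simple_graph V E \<Longrightarrow> finite (neighbours E v)"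
  by (meson finite_subset neighbours_subset simple_graph_def)

lemma finite_neighbourhood: "simple_graph V E \<Longrightarrow> finite (neighbourhood E A)"
  by (meson finite_subset neighbourhood_subset simple_graph_def)

lemma neighbourhood_mono: "A \<subseteq> B \<Longrightarrow> neighbourhood E A \<subseteq> neighbourhood E B"
  unfolding neighbourhood_def by auto

lemma card_neighbourhood_insert:
  assumes "simple_graph V E"
  shows "card (neighbourhood E (insert v A))
           = card (neighbourhood E A) + card (neighbours E v - neighbourhood E A)"
proof -
  have "neighbourhood E (insert v A) = neighbourhood E A \<union> (neighbours E v - neighbourhood E A)"
    unfolding neighbourhood_def by auto
  moreover have "card (neighbourhood E A \<union> (neighbours E v - neighbourhood E A))
      = card (neighbourhood E A) + card (neighbours E v - neighbourhood E A)"
    by (rule card_Un_disjoint) (use finite_neighbourhood[OF assms] finite_neighbours[OF assms] in auto)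
  ultimately show ?thesis by simp
qed

lemma card_neighbours:
  assumes "simple_graph V E"
  shows "card (neighbours E v) = degree E v"
proof -
  have "bij_betw (\<lambda>w. {v, w}) (neighbours E v) {e\<in>E. v \<in> e}"
  proof (rule bij_betwI')
    show "\<And>x y. ({v, x} = {v, y}) = (x = y)"
      by (metis doubleton_eq_iff)
    show "\<And>x. x \<in> neighbours E v \<Longrightarrow> {v, x} \<in> {e \<in> E. v \<in> e}"
      by (auto simp: neighbours_def)
    show "\<exists>x\<in>neighbours E v. e = {v, x}" if "e \<in> {e \<in> E. v \<in> e}" for e
    proof -
      have "card e = 2" "e \<in> E" "v \<in> e" using that assms by (auto simp: simple_graph_def)
      then obtain a b where "e = {a, b}" by (auto simp: card_2_iff)
      then show ?thesis using \<open>v \<in> e\<close> \<open>e \<in> E\<close> by (auto simp: neighbours_def insert_commute)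
    qed
  qed
  then show ?thesis unfolding degree_def by (simp add: bij_betw_same_card)
qed

lemma sum_degree:
  assumes "simple_graph V E"
  shows "(\<Sum>v\<in>V. degree E v) = 2 * card E"
proof -
  have fin: "finite V" "finite E"
    using assms simple_graph_finite_edges by (auto simp: simple_graph_def)
  have "(\<Sum>v\<in>V. degree E v) = (\<Sum>v\<in>V. \<Sum>e\<in>{e\<in>E. v \<in> e}. 1::nat)"
    by (simp add: degree_def)
  also have "\<dots> = (\<Sum>e\<in>E. \<Sum>v\<in>{v\<in>V. v \<in> e}. 1)"
    using fin by (rule sum.swap_restrict)
  also have "\<dots> = (\<Sum>e\<in>E. 2)"
  proof (rule sum.cong[OF refl])
    fix e assume "e \<in> E"
    then have "{v\<in>V. v \<in> e} = e" "card e = 2" using assms by (auto simp: simple_graph_def)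
    then show "(\<Sum>v\<in>{v\<in>V. v \<in> e}. 1::nat) = 2" by simp
  qed
  finally show ?thesis by simp
qed

lemma card_edges_le:
  assumes "simple_graph V E" "max_degree_le V E d"
  shows "2 * card E \<le> d * card V"
proof -
  have "2 * card E = (\<Sum>v\<in>V. degree E v)" using sum_degree[OF assms(1)] by simp
  also have "\<dots> \<le> (\<Sum>v\<in>V. d)" using assms(2) by (intro sum_mono) (auto simp: max_degree_le_def)
  finally show ?thesis by (simp add: mult.commute)
qed

lemma sum_card_neighbours_diff:
  assumes "simple_graph V E" "B \<subseteq> V"
  shows "(\<Sum>x\<in>V. card (neighbours E x - B)) = (\<Sum>y\<in>V - B. degree E y)"
proof -
  have fV: "finite V" using assms(1) by (simp add: simple_graph_def)
  have "neighbours E x - B = {y\<in>V - B. {x, y} \<in> E}" for x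
    using neighbours_subset[OF assms(1), of x] by (auto simp: neighbours_def)
  then have "(\<Sum>x\<in>V. card (neighbours E x - B)) = (\<Sum>x\<in>V. \<Sum>y\<in>{y\<in>V - B. {x, y} \<in> E}. 1)"
    by simp
  also have "\<dots> = (\<Sum>y\<in>V - B. \<Sum>x\<in>{x\<in>V. {x, y} \<in> E}. 1)"
    using fV by (intro sum.swap_restrict) auto
  also have "\<dots> = (\<Sum>y\<in>V - B. card (neighbours E y))"
  proof -
    have "{x\<in>V. {x, y} \<in> E} = neighbours E y" for y
      using neighbours_subset[OF assms(1), of y] by (auto simp: neighbours_def insert_commute)
    then show ?thesis by simp
  qed
  finally show ?thesis by (simp add: card_neighbours[OF assms(1)])
qed

lemma sum_le_card_threshold:
  fixes f :: "'a \<Rightarrow> real"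
  assumes "finite V" "\<And>x. x \<in> V \<Longrightarrow> f x \<le> D" "0 \<le> g"
  shows "(\<Sum>x\<in>V. f x) \<le> D * real (card {x\<in>V. g \<le> f x}) + g * real (card V)"
proof -
  let ?G = "{x\<in>V. g \<le> f x}"
  have "(\<Sum>x\<in>V. f x) \<le> (\<Sum>x\<in>V. if x \<in> ?G then D else g)"
    using assms(2) by (intro sum_mono) auto
  also have "\<dots> = D * real (card ?G) + g * real (card (V - ?G))"
  proof -
    have "V \<inter> {x. x \<in> ?G} = ?G" "V \<inter> - {x. x \<in> ?G} = V - ?G" by auto
    then show ?thesis using sum.If_cases[OF assms(1), of "\<lambda>x. x \<in> ?G" "\<lambda>_. D" "\<lambda>_. g"]
      by (simp add: mult.commute)
  qed
  also have "\<dots> \<le> D * real (card ?G) + g * real (card V)"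
    using assms(1,3) by (simp add: card_mono mult_left_mono)
  finally show ?thesis .
qed

lemma card_threshold_neighbours_diff:
  assumes sg: "simple_graph V E" and md: "max_degree_le V E d" and B: "B \<subseteq> V" and g: "0 \<le> g"
  shows "2 * real (card E) - real d * real (card B)
           \<le> real d * real (card {x\<in>V. g \<le> real (card (neighbours E x - B))}) + g * real (card V)"
proof -
  have fV: "finite V" using sg by (simp add: simple_graph_def)
  have deg: "degree E v \<le> d" if "v \<in> V" for v
    using md that by (simp add: max_degree_le_def)
  have "(\<Sum>y\<in>V - B. degree E y) + (\<Sum>y\<in>B. degree E y) = 2 * card E"
    using sum_degree[OF sg] sum.subset_diff[OF B fV, of "degree E"] by simp
  moreover have "(\<Sum>y\<in>B. degree E y) \<le> d * card B"
    using sum_bounded_above[of B "degree E" d] deg B by (auto simp: mult.commute)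
  ultimately have "2 * card E \<le> (\<Sum>y\<in>V - B. degree E y) + d * card B" by linarith
  then have "2 * real (card E) - real d * real (card B) \<le> (\<Sum>y\<in>V - B. real (degree E y))"
    using of_nat_mono[where 'a=real] by fastforce
  also have "\<dots> = (\<Sum>x\<in>V. real (card (neighbours E x - B)))"
    using arg_cong[OF sum_card_neighbours_diff[OF sg B], of real] by simp
  also have "\<dots> \<le> real d * real (card {x\<in>V. g \<le> real (card (neighbours E x - B))}) + g * real (card V)"
  proof (rule sum_le_card_threshold[OF fV _ g])
    fix x assume "x \<in> V"
    have "card (neighbours E x - B) \<le> card (neighbours E x)"
      using finite_neighbours[OF sg] by (simp add: card_mono)
    then show "real (card (neighbours E x - B)) \<le> real d"
      using deg[OF \<open>x \<in> V\<close>] card_neighbours[OF sg] by simp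
  qed
  finally show ?thesis .
qed

definition sparse_sets :: "'a set \<Rightarrow> 'a set set \<Rightarrow> real \<Rightarrow> nat \<Rightarrow> 'a set set" where
  "sparse_sets V E t k = {A. A \<subseteq> V \<and> card A = k \<and> real (card (neighbourhood E A)) < t}"

definition expanding_vertices :: "'a set \<Rightarrow> 'a set set \<Rightarrow> real \<Rightarrow> 'a set \<Rightarrow> 'a set" where
  "expanding_vertices V E g A = {x\<in>V. g \<le> real (card (neighbours E x - neighbourhood E A))}"

definition nbhd_weight :: "'a set set \<Rightarrow> real \<Rightarrow> 'a set \<Rightarrow> real" where
  "nbhd_weight E g A = exp (- 3 * real (card (neighbourhood E A)) / g)"

lemma finite_sparse_sets: "finite V \<Longrightarrow> finite (sparse_sets V E t k)"
  unfolding sparse_sets_def by (rule finite_subset[of _ "Pow V"]) auto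

lemma expanding_vertices_disjoint:
  assumes "g > 0"
  shows "expanding_vertices V E g A \<inter> A = {}"
proof -
  have "neighbours E x - neighbourhood E A = {}" if "x \<in> A" for x
    using that unfolding neighbourhood_def by auto
  then show ?thesis using assms unfolding expanding_vertices_def by fastforce
qed

lemma nbhd_weight_insert:
  assumes sg: "simple_graph V E" and g: "g > 0"
  shows "nbhd_weight E g (insert v A)
           \<le> nbhd_weight E g A * (if v \<in> expanding_vertices V E g A then exp (-3) else 1)"
proof -
  let ?new = "real (card (neighbours E v - neighbourhood E A))"
  have "nbhd_weight E g (insert v A) = nbhd_weight E g A * exp (- 3 * ?new / g)"
    unfolding nbhd_weight_def card_neighbourhood_insert[OF sg]
    by (simp add: exp_add[symmetric] add_divide_distrib diff_divide_distrib)
  moreover have "exp (- 3 * ?new / g) \<le> (if v \<in> expanding_vertices V E g A then exp (-3) else 1)"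
  proof (cases "v \<in> expanding_vertices V E g A")
    case True
    then have "g \<le> ?new" unfolding expanding_vertices_def by auto
    then have "- 3 * ?new / g \<le> -3" using g by (simp add: field_simps)
    then show ?thesis using True by simp
  next
    case False
    have "- 3 * ?new / g \<le> 0" using g by (simp add: field_simps)
    then show ?thesis using False by simp
  qed
  ultimately show ?thesis by (simp add: nbhd_weight_def mult_left_mono)
qed

lemma sum_sparse_sets_containing_le:
  fixes f :: "'a set \<Rightarrow> real"
  assumes sg: "simple_graph V E" and f: "\<And>A. 0 \<le> f A"
  shows "(\<Sum>A\<in>{A\<in>sparse_sets V E t (Suc k). v \<in> A}. f A)
           \<le> (\<Sum>A\<in>{A\<in>sparse_sets V E t k. v \<notin> A}. f (insert v A))"
proof -
  have fV: "finite V" using sg by (simp add: simple_graph_def)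
  let ?X = "{A\<in>sparse_sets V E t (Suc k). v \<in> A}"
  have "(\<Sum>A\<in>?X. f A) = (\<Sum>A\<in>?X. f (insert v (A - {v})))"
    by (rule sum.cong[OF refl]) (simp add: insert_absorb)
  also have "\<dots> = (\<Sum>A\<in>(\<lambda>A. A - {v}) ` ?X. f (insert v A))"
  proof -
    have "inj_on (\<lambda>A. A - {v}) ?X"
      by (rule inj_onI) (metis (no_types, lifting) insert_Diff mem_Collect_eq)
    then show ?thesis by (simp add: sum.reindex)
  qed
  also have "\<dots> \<le> (\<Sum>A\<in>{A\<in>sparse_sets V E t k. v \<notin> A}. f (insert v A))"
  proof (rule sum_mono2)
    show "finite {A\<in>sparse_sets V E t k. v \<notin> A}" using finite_sparse_sets[OF fV] by simp
    show "(\<lambda>A. A - {v}) ` ?X \<subseteq> {A\<in>sparse_sets V E t k. v \<notin> A}"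
    proof
      fix A' assume "A' \<in> (\<lambda>A. A - {v}) ` ?X"
      then obtain A where A: "A \<in> sparse_sets V E t (Suc k)" "v \<in> A" "A' = A - {v}" by auto
      have "finite A" using A(1) fV unfolding sparse_sets_def by (auto intro: finite_subset)
      moreover have "card (neighbourhood E A') \<le> card (neighbourhood E A)"
        using A(3) neighbourhood_mono[of A' A E] finite_neighbourhood[OF sg] by (auto intro: card_mono)
      ultimately show "A' \<in> {A\<in>sparse_sets V E t k. v \<notin> A}"
        using A unfolding sparse_sets_def by auto
    qed
  qed (use f in auto)
  finally show ?thesis .
qed

lemma sum_discounted_complement_le:
  assumes "finite V" "A \<subseteq> V" "card A = k" "X \<subseteq> V - A"
    and "q * real (card V) \<le> real (card X)" "0 \<le> q" "c \<le> 1"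
  shows "(\<Sum>v\<in>V - A. if v \<in> X then c else 1) \<le> real (card V - k) * (1 - (1 - c) * q)"
proof -
  have cVA: "card (V - A) = card V - k"
    using assms(1-3) by (simp add: card_Diff_subset finite_subset)
  have "(\<Sum>v\<in>V - A. if v \<in> X then c else 1) = (\<Sum>v\<in>V - A. 1 - (if v \<in> X then 1 - c else 0))"
    by (rule sum.cong) auto
  also have "\<dots> = real (card (V - A)) - real (card X) * (1 - c)"
    using assms(1,4) by (simp add: sum_subtractf sum.If_cases Int_absorb1)
  also have "\<dots> \<le> real (card V - k) * (1 - (1 - c) * q)"
  proof -
    have "q * real (card V - k) \<le> q * real (card V)" using assms(6) by (simp add: mult_left_mono)
    then have "q * real (card V - k) * (1 - c) \<le> real (card X) * (1 - c)"
      using assms(5,7) by (intro mult_right_mono) auto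
    then show ?thesis using cVA by (simp add: algebra_simps)
  qed
  finally show ?thesis .
qed

lemma sum_nbhd_weight_sparse_Suc_le:
  assumes sg: "simple_graph V E" and g: "g > 0" and q: "0 \<le> q"
    and expanding: "\<And>A. A \<in> sparse_sets V E t k \<Longrightarrow>
                      q * real (card V) \<le> real (card (expanding_vertices V E g A))"
  shows "real (Suc k) * (\<Sum>A\<in>sparse_sets V E t (Suc k). nbhd_weight E g A)
           \<le> real (card V - k) * (1 - (1 - exp (-3)) * q) * (\<Sum>A\<in>sparse_sets V E t k. nbhd_weight E g A)"
proof -
  have fV: "finite V" using sg by (simp add: simple_graph_def)
  let ?S1 = "sparse_sets V E t (Suc k)" and ?S0 = "sparse_sets V E t k" and ?w = "nbhd_weight E g"
  let ?h = "\<lambda>A v. if v \<in> expanding_vertices V E g A then exp (-3) else (1::real)"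
  have fin: "finite ?S1" "finite ?S0" using finite_sparse_sets[OF fV] by auto
  have w_nonneg: "0 \<le> ?w A" for A by (simp add: nbhd_weight_def)
  have "real (Suc k) * (\<Sum>A\<in>?S1. ?w A) = (\<Sum>A\<in>?S1. \<Sum>v\<in>{v\<in>V. v \<in> A}. ?w A)"
  proof -
    have "{v\<in>V. v \<in> A} = A" "card A = Suc k" if "A \<in> ?S1" for A
      using that by (auto simp: sparse_sets_def)
    then show ?thesis by (simp add: sum_distrib_left)
  qed
  also have "\<dots> = (\<Sum>v\<in>V. \<Sum>A\<in>{A\<in>?S1. v \<in> A}. ?w A)"
    using fV fin(1) by (rule sum.swap_restrict[symmetric])
  also have "\<dots> \<le> (\<Sum>v\<in>V. \<Sum>A\<in>{A\<in>?S0. v \<notin> A}. ?w A * ?h A v)"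
  proof (rule sum_mono)
    fix v
    have "(\<Sum>A\<in>{A\<in>?S1. v \<in> A}. ?w A) \<le> (\<Sum>A\<in>{A\<in>?S0. v \<notin> A}. ?w (insert v A))"
      by (rule sum_sparse_sets_containing_le[OF sg w_nonneg])
    also have "\<dots> \<le> (\<Sum>A\<in>{A\<in>?S0. v \<notin> A}. ?w A * ?h A v)"
      by (rule sum_mono) (rule nbhd_weight_insert[OF sg g])
    finally show "(\<Sum>A\<in>{A\<in>?S1. v \<in> A}. ?w A) \<le> (\<Sum>A\<in>{A\<in>?S0. v \<notin> A}. ?w A * ?h A v)" .
  qed
  also have "\<dots> = (\<Sum>A\<in>?S0. ?w A * (\<Sum>v\<in>V - A. ?h A v))"
    using sum.swap_restrict[OF fin(2) fV, of "\<lambda>A v. ?w A * ?h A v" "\<lambda>A v. v \<notin> A"]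
    by (simp add: sum_distrib_left set_diff_eq)
  also have "\<dots> \<le> (\<Sum>A\<in>?S0. ?w A * (real (card V - k) * (1 - (1 - exp (-3)) * q)))"
  proof (rule sum_mono, rule mult_left_mono[OF _ w_nonneg])
    fix A assume A: "A \<in> ?S0"
    show "(\<Sum>v\<in>V - A. ?h A v) \<le> real (card V - k) * (1 - (1 - exp (-3)) * q)"
    proof (rule sum_discounted_complement_le[OF fV _ _ _ expanding[OF A] q])
      show "expanding_vertices V E g A \<subseteq> V - A"
        using expanding_vertices_disjoint[OF g, of V E A] by (auto simp: expanding_vertices_def)
    qed (use A in \<open>auto simp: sparse_sets_def\<close>)
  qed
  finally show ?thesis by (simp add: sum_distrib_right mult.commute)
qed

lemma Suc_times_binomial_eq_diff:
  "real (Suc k) * real (n choose Suc k) = real (n - k) * real (n choose k)"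
  by (metis binomial_absorption binomial_absorb_comp of_nat_mult)

lemma sum_nbhd_weight_sparse_le:
  assumes sg: "simple_graph V E" and g: "g > 0" and q: "0 \<le> q" "(1 - exp (-3)) * q \<le> 1"
    and expanding: "\<And>k A. A \<in> sparse_sets V E t k \<Longrightarrow>
                      q * real (card V) \<le> real (card (expanding_vertices V E g A))"
  shows "(\<Sum>A\<in>sparse_sets V E t k. nbhd_weight E g A) \<le> real (card V choose k) * (1 - (1 - exp (-3)) * q) ^ k"
proof (induction k)
  case 0
  have "sparse_sets V E t 0 \<subseteq> {{}}"
    using sg by (auto simp: sparse_sets_def simple_graph_def dest: finite_subset)
  then have "(\<Sum>A\<in>sparse_sets V E t 0. nbhd_weight E g A) \<le> (\<Sum>A\<in>{{}}. nbhd_weight E g A)"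
    by (intro sum_mono2) (auto simp: nbhd_weight_def)
  then show ?case by (simp add: nbhd_weight_def neighbourhood_def)
next
  case (Suc k)
  let ?r = "1 - (1 - exp (-3)) * q"
  have "real (Suc k) * (\<Sum>A\<in>sparse_sets V E t (Suc k). nbhd_weight E g A)
          \<le> real (card V - k) * ?r * (\<Sum>A\<in>sparse_sets V E t k. nbhd_weight E g A)"
    by (rule sum_nbhd_weight_sparse_Suc_le[OF sg g q(1) expanding])
  also have "\<dots> \<le> real (card V - k) * ?r * (real (card V choose k) * ?r ^ k)"
    using Suc.IH q(2) by (intro mult_left_mono) auto
  also have "\<dots> = real (Suc k) * (real (card V choose Suc k) * ?r ^ Suc k)"
  proof -
    have "real (Suc k) * (real (card V choose Suc k) * ?r ^ Suc k)
            = (real (Suc k) * real (card V choose Suc k)) * (?r * ?r ^ k)"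
      by (simp only: mult.assoc power_Suc)
    then show ?thesis by (simp only: Suc_times_binomial_eq_diff mult_ac)
  qed
  finally show ?case by (simp del: of_nat_Suc)
qed

lemma card_sparse_sets_le:
  assumes sg: "simple_graph V E" and g: "g > 0" and q: "0 \<le> q" "(1 - exp (-3)) * q \<le> 1"
    and expanding: "\<And>k A. A \<in> sparse_sets V E t k \<Longrightarrow>
                      q * real (card V) \<le> real (card (expanding_vertices V E g A))"
  shows "real (card (sparse_sets V E t k))
           \<le> real (card V choose k) * (1 - (1 - exp (-3)) * q) ^ k * exp (3 * t / g)"
proof -
  have "(\<Sum>A\<in>sparse_sets V E t k. exp (- 3 * t / g)) \<le> (\<Sum>A\<in>sparse_sets V E t k. nbhd_weight E g A)"
  proof (rule sum_mono)
    fix A assume "A \<in> sparse_sets V E t k"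
    then have "real (card (neighbourhood E A)) < t" by (simp add: sparse_sets_def)
    then show "exp (- 3 * t / g) \<le> nbhd_weight E g A"
      using g by (simp add: nbhd_weight_def divide_right_mono)
  qed
  also have "\<dots> \<le> real (card V choose k) * (1 - (1 - exp (-3)) * q) ^ k"
    by (rule sum_nbhd_weight_sparse_le[OF assms])
  finally have "real (card (sparse_sets V E t k)) * exp (- 3 * t / g) * exp (3 * t / g)
      \<le> real (card V choose k) * (1 - (1 - exp (-3)) * q) ^ k * exp (3 * t / g)"
    by (simp add: mult_right_mono)
  then show ?thesis by (simp add: mult.assoc exp_add[symmetric])
qed

lemma exp_minus_3_le: "exp (-3::real) \<le> 1/7"
proof -
  have "2 ^ 3 \<le> exp (1::real) ^ 3"
    using exp_ge_add_one_self[of 1] by (intro power_mono) simp_all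
  then have "8 \<le> exp (3::real)" by (simp add: exp_of_nat_mult[symmetric])
  then show ?thesis by (simp add: exp_minus field_simps)
qed

lemma card_expanding_vertices_ge:
  assumes sg: "simple_graph V E" and md: "max_degree_le V E d" and d: "d > 0" and \<beta>: "\<beta> > 0"
    and edges: "4 * \<beta> * real d * real (card V) \<le> real (card E)"
    and A: "real (card (neighbourhood E A)) \<le> 4 * \<beta> * real (card V)"
  shows "7 / 2 * \<beta> * real (card V) \<le> real (card (expanding_vertices V E (\<beta> * real d / 2) A))"
proof -
  have "2 * real (card E) - real d * real (card (neighbourhood E A))
          \<le> real d * real (card (expanding_vertices V E (\<beta> * real d / 2) A)) + \<beta> * real d / 2 * real (card V)"
    using card_threshold_neighbours_diff[OF sg md neighbourhood_subset[OF sg], of "\<beta> * real d / 2" A] \<beta>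
    by (simp add: expanding_vertices_def)
  moreover have "real d * real (card (neighbourhood E A)) \<le> real d * (4 * \<beta> * real (card V))"
    using A by (simp add: mult_left_mono)
  ultimately have "real d * (7 / 2 * \<beta> * real (card V))
                     \<le> real d * real (card (expanding_vertices V E (\<beta> * real d / 2) A))"
    using edges by (simp add: algebra_simps)
  then show ?thesis using d by simp
qed

lemma edge_density_le_eighth:
  assumes sg: "simple_graph V E" and md: "max_degree_le V E d" and d: "d > 0" and n: "card V > 0"
    and edges: "4 * \<beta> * real d * real (card V) \<le> real (card E)"
  shows "8 * \<beta> \<le> 1"
proof -
  have "2 * real (card E) \<le> real d * real (card V)"
    using card_edges_le[OF sg md] by (metis of_nat_le_iff of_nat_mult of_nat_numeral)
  with edges have "(8 * \<beta>) * (real d * real (card V)) \<le> 1 * (real d * real (card V))"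
    by (simp add: algebra_simps)
  moreover have "0 < real d * real (card V)" using d n by simp
  ultimately show ?thesis by (rule mult_right_le_imp_le)
qed

lemma card_sparse_sets_le_exp:
  assumes sg: "simple_graph V E" and md: "max_degree_le V E d" and d: "d > 0" and \<beta>: "\<beta> > 0"
    and n: "card V > 0" and edges: "4 * \<beta> * real d * real (card V) \<le> real (card E)"
    and t: "0 \<le> t" "t \<le> 4 * \<beta> * real (card V)"
  shows "real (card (sparse_sets V E t k))
           \<le> real (card V choose k) * exp (6 * t / (\<beta> * real d) - 3 * \<beta> * real k)"
proof -
  define q where "q = 7 / 2 * \<beta>"
  let ?r = "1 - (1 - exp (-3)) * q"
  have "8 * \<beta> \<le> 1" by (rule edge_density_le_eighth[OF sg md d n edges])
  moreover have "(1 - exp (-3)) * q \<le> 1 * q" "6 / 7 * q \<le> (1 - exp (-3)) * q"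
    using exp_minus_3_le \<beta> unfolding q_def by (intro mult_right_mono; simp)+
  ultimately have r: "0 \<le> ?r" "?r \<le> exp (- 3 * \<beta>)"
    using exp_ge_add_one_self[of "- 3 * \<beta>"] unfolding q_def by linarith+
  have "real (card (sparse_sets V E t k)) \<le> real (card V choose k) * ?r ^ k * exp (3 * t / (\<beta> * real d / 2))"
  proof (rule card_sparse_sets_le[OF sg])
    fix k A assume "A \<in> sparse_sets V E t k"
    then have "real (card (neighbourhood E A)) \<le> 4 * \<beta> * real (card V)"
      using t by (simp add: sparse_sets_def)
    then show "q * real (card V) \<le> real (card (expanding_vertices V E (\<beta> * real d / 2) A))"
      using card_expanding_vertices_ge[OF sg md d \<beta> edges] unfolding q_def by blast
  qed (use d \<beta> r in \<open>auto simp: q_def\<close>)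
  also have "\<dots> \<le> real (card V choose k) * exp (- 3 * \<beta>) ^ k * exp (3 * t / (\<beta> * real d / 2))"
    using r by (intro mult_right_mono mult_left_mono power_mono) auto
  also have "\<dots> = real (card V choose k) * exp (6 * t / (\<beta> * real d) - 3 * \<beta> * real k)"
  proof -
    have "exp (- 3 * \<beta>) ^ k * exp (3 * t / (\<beta> * real d / 2))
            = exp (real k * (- 3 * \<beta>) + 3 * t / (\<beta> * real d / 2))"
      by (simp only: exp_of_nat_mult exp_add)
    also have "\<dots> = exp (6 * t / (\<beta> * real d) - 3 * \<beta> * real k)"
      by (rule arg_cong[where f = exp]) (simp add: field_simps)
    finally have "exp (- 3 * \<beta>) ^ k * exp (3 * t / (\<beta> * real d / 2))
                    = exp (6 * t / (\<beta> * real d) - 3 * \<beta> * real k)" .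
    then show ?thesis by (simp add: mult.assoc)
  qed
  finally show ?thesis .
qed

lemma binomial_diff_le_pow:
  assumes "k \<le> N" "0 < N"
  shows "real ((N - k) choose r) \<le> real (N choose r) * (1 - real k / real N) ^ r"
proof (induction r)
  case 0
  then show ?case by simp
next
  case (Suc r)
  let ?p = "1 - real k / real N"
  have p: "0 \<le> ?p" using assms by simp
  have "real (Suc r) * real ((N - k) choose Suc r) = real (N - k - r) * real ((N - k) choose r)"
    by (rule Suc_times_binomial_eq_diff)
  also have "\<dots> \<le> ?p * real (N - r) * (real (N choose r) * ?p ^ r)"
  proof (cases "r \<le> N - k")
    case True
    have "(real N - real k - real r) * real N \<le> (real N - real k) * (real N - real r)"
      by (simp add: algebra_simps)
    then have "real (N - k - r) \<le> ?p * real (N - r)"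
      using True assms by (simp add: of_nat_diff field_simps)
    then show ?thesis
      using Suc.IH p by (intro mult_mono) auto
  next
    case False
    then show ?thesis using p by simp
  qed
  also have "\<dots> = ?p * (real (Suc r) * real (N choose Suc r)) * ?p ^ r"
    by (simp only: Suc_times_binomial_eq_diff mult_ac)
  finally have "real (Suc r) * real ((N - k) choose Suc r) \<le> real (Suc r) * (real (N choose Suc r) * ?p ^ Suc r)"
    by (simp add: mult_ac)
  then show ?case by (simp only: mult_le_cancel_left_pos of_nat_0_less_iff zero_less_Suc)
qed

lemma binomial_diff_le_exp:
  "real ((N - k) choose r) \<le> real (N choose r) * exp (- real k * real r / real N)"
proof (cases "k \<le> N \<and> 0 < N")
  case True
  have "(1 - real k / real N) ^ r \<le> exp (- real k / real N) ^ r"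
    using True exp_ge_add_one_self[of "- real k / real N"] by (intro power_mono) auto
  also have "\<dots> = exp (- real k * real r / real N)"
    by (simp add: exp_of_nat_mult[symmetric] mult_ac)
  finally show ?thesis
    using binomial_diff_le_pow[of k N r] True by (meson mult_left_mono of_nat_0_le_iff order_trans)
next
  case False
  then have "N - k = 0 \<or> N = 0" by auto
  then show ?thesis by (cases r) auto
qed

definition indep_sets :: "'a set \<Rightarrow> 'a set set \<Rightarrow> nat \<Rightarrow> 'a set set" where
  "indep_sets V E k = {S. independent_set V E S \<and> card S = k}"

lemma num_indep_eq_card: "num_indep V E k = card (indep_sets V E k)"
  by (simp add: num_indep_def indep_sets_def)

lemma finite_indep_sets: "finite V \<Longrightarrow> finite (indep_sets V E k)"
  unfolding indep_sets_def independent_set_def by (rule finite_subset[of _ "Pow V"]) auto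

lemma card_indep_sets_le:
  assumes "finite V"
  shows "card (indep_sets V E k) \<le> card V choose k"
proof -
  have "indep_sets V E k \<subseteq> {B. B \<subseteq> V \<and> card B = k}"
    unfolding indep_sets_def independent_set_def by blast
  then show ?thesis
    using card_mono[of "{B. B \<subseteq> V \<and> card B = k}"] n_subsets[OF assms] assms by simp
qed

lemma independent_set_disjoint_neighbourhood:
  assumes "independent_set V E S" "A \<subseteq> S"
  shows "S \<inter> neighbourhood E A = {}"
proof (rule ccontr)
  assume "S \<inter> neighbourhood E A \<noteq> {}"
  then obtain v w where "w \<in> S" "v \<in> A" "{v, w} \<in> E"
    unfolding neighbourhood_def neighbours_def by auto
  moreover from this have "{v, w} \<subseteq> S" using assms(2) by auto
  ultimately show False using assms(1) unfolding independent_set_def by blast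
qed

lemma card_indep_supersets_le:
  assumes "finite V"
  shows "card {S\<in>indep_sets V E m. A \<subseteq> S}
           \<le> card (V - A - neighbourhood E A) choose (m - card A)"
proof -
  let ?X = "{S\<in>indep_sets V E m. A \<subseteq> S}" and ?W = "V - A - neighbourhood E A"
  have inj: "inj_on (\<lambda>S. S - A) ?X"
  proof (rule inj_onI)
    fix S S' assume "S \<in> ?X" "S' \<in> ?X" "S - A = S' - A"
    then have "A \<union> (S - A) = A \<union> (S' - A)" "A \<subseteq> S" "A \<subseteq> S'" by simp_all
    then show "S = S'" by blast
  qed
  have img: "(\<lambda>S. S - A) ` ?X \<subseteq> {T. T \<subseteq> ?W \<and> card T = m - card A}"
  proof
    fix T assume "T \<in> (\<lambda>S. S - A) ` ?X"
    then obtain S where S: "independent_set V E S" "card S = m" "A \<subseteq> S" "T = S - A"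
      by (auto simp: indep_sets_def)
    have SV: "S \<subseteq> V" using S(1) by (simp add: independent_set_def)
    then have "finite A" using S(3) assms by (meson finite_subset)
    then have "card T = m - card A" using S(2-4) by (simp add: card_Diff_subset)
    moreover have "T \<subseteq> ?W" using S(4) SV independent_set_disjoint_neighbourhood[OF S(1,3)] by blast
    ultimately show "T \<in> {T. T \<subseteq> ?W \<and> card T = m - card A}" by blast
  qed
  have "finite {T. T \<subseteq> ?W \<and> card T = m - card A}"
    by (rule finite_subset[of _ "Pow ?W"]) (use assms in auto)
  then have "card ((\<lambda>S. S - A) ` ?X) \<le> card {T. T \<subseteq> ?W \<and> card T = m - card A}"
    using img by (rule card_mono)
  then have "card ?X \<le> card {T. T \<subseteq> ?W \<and> card T = m - card A}"
    by (simp add: card_image[OF inj])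
  also have "\<dots> = card ?W choose (m - card A)"
    using assms by (simp add: n_subsets)
  finally show ?thesis .
qed

lemma card_diff_neighbourhood:
  assumes sg: "simple_graph V E" and A: "independent_set V E A"
  shows "card (V - A - neighbourhood E A) = card V - card A - card (neighbourhood E A)"
proof -
  have fV: "finite V" using sg by (simp add: simple_graph_def)
  have AV: "A \<subseteq> V" using A by (simp add: independent_set_def)
  then have fA: "finite A" using fV by (rule finite_subset)
  have "A \<inter> neighbourhood E A = {}"
    using independent_set_disjoint_neighbourhood[OF A subset_refl] .
  then have "card (A \<union> neighbourhood E A) = card A + card (neighbourhood E A)"
    using fA finite_neighbourhood[OF sg] by (simp add: card_Un_disjoint)
  moreover have "A \<union> neighbourhood E A \<subseteq> V" using AV neighbourhood_subset[OF sg] by blast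
  moreover have "V - A - neighbourhood E A = V - (A \<union> neighbourhood E A)" by blast
  ultimately show ?thesis
    using fA finite_neighbourhood[OF sg] by (simp add: card_Diff_subset)
qed

lemma sum_card_indep_supersets:
  assumes "finite V"
  shows "card (indep_sets V E m) * (m choose a) = (\<Sum>A\<in>indep_sets V E a. card {S\<in>indep_sets V E m. A \<subseteq> S})"
proof -
  have fin: "finite (indep_sets V E m)" "finite (indep_sets V E a)"
    using finite_indep_sets[OF assms] by auto
  have subsets: "{A. A \<subseteq> S \<and> card A = a} = {A\<in>indep_sets V E a. A \<subseteq> S}" "card S = m" "finite S"
    if "S \<in> indep_sets V E m" for S
    using that assms by (auto simp: indep_sets_def independent_set_def intro: finite_subset)
  have "card (indep_sets V E m) * (m choose a) = (\<Sum>S\<in>indep_sets V E m. card {A. A \<subseteq> S \<and> card A = a})"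
    using subsets(2,3) by (simp add: n_subsets)
  also have "\<dots> = (\<Sum>S\<in>indep_sets V E m. \<Sum>A\<in>{A\<in>indep_sets V E a. A \<subseteq> S}. 1)"
    using subsets(1) by simp
  also have "\<dots> = (\<Sum>A\<in>indep_sets V E a. \<Sum>S\<in>{S\<in>indep_sets V E m. A \<subseteq> S}. 1)"
    using fin by (rule sum.swap_restrict)
  finally show ?thesis by simp
qed

lemma card_indep_supersets_le_exp:
  assumes sg: "simple_graph V E" and A: "A \<in> indep_sets V E a" and a: "a < card V" and t: "0 \<le> t"
  shows "real (card {S\<in>indep_sets V E m. A \<subseteq> S})
           \<le> real ((card V - a) choose (m - a))
             * ((if real (card (neighbourhood E A)) < t then 1 else 0)
                + exp (- t * real (m - a) / real (card V)))"
proof -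
  let ?N = "card V - a" and ?c = "card (neighbourhood E A)"
  let ?E2 = "exp (- t * real (m - a) / real (card V))"
  have "card {S\<in>indep_sets V E m. A \<subseteq> S} \<le> (?N - ?c) choose (m - a)"
    using card_indep_supersets_le[of V E m A] card_diff_neighbourhood[OF sg, of A] A sg
    by (simp add: indep_sets_def simple_graph_def)
  then have bound: "real (card {S\<in>indep_sets V E m. A \<subseteq> S}) \<le> real ((?N - ?c) choose (m - a))"
    by simp
  show ?thesis
  proof (cases "real ?c < t")
    case True
    have "real ((?N - ?c) choose (m - a)) \<le> real (?N choose (m - a))"
      by (simp add: binomial_right_mono)
    also have "\<dots> \<le> real (?N choose (m - a)) * (1 + ?E2)"
      by (simp add: mult_le_cancel_left1)
    finally show ?thesis using True bound by simp
  next
    case False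
    have "t * real (m - a) / real (card V) \<le> t * real (m - a) / real ?N"
      using a t by (intro divide_left_mono) auto
    also have "\<dots> \<le> real ?c * real (m - a) / real ?N"
      using False by (intro divide_right_mono mult_right_mono) auto
    finally have "exp (- real ?c * real (m - a) / real ?N) \<le> ?E2" by simp
    then have "real ((?N - ?c) choose (m - a)) \<le> real (?N choose (m - a)) * ?E2"
      using binomial_diff_le_exp[of ?N ?c "m - a"] by (meson mult_left_mono of_nat_0_le_iff order_trans)
    then show ?thesis using False bound by simp
  qed
qed

lemma num_indep_times_binomial_le:
  assumes sg: "simple_graph V E" and am: "a < m" and mn: "m \<le> card V" and t: "0 \<le> t"
  shows "real (num_indep V E m) * real (card V choose a)
           \<le> real (card V choose m) * (real (card (sparse_sets V E t a))
                + real (card V choose a) * exp (- t * real (m - a) / real (card V)))"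
proof -
  have fV: "finite V" using sg by (simp add: simple_graph_def)
  let ?I = "indep_sets V E" and ?n = "card V"
  let ?E2 = "exp (- t * real (m - a) / real ?n)" and ?sparse = "\<lambda>A. real (card (neighbourhood E A)) < t"
  let ?C = "real ((?n - a) choose (m - a))"
  let ?Y = "real (card (sparse_sets V E t a)) + real (?n choose a) * ?E2"
  have "real (card (?I m)) * real (m choose a) = (\<Sum>A\<in>?I a. real (card {S\<in>?I m. A \<subseteq> S}))"
    using arg_cong[OF sum_card_indep_supersets[OF fV, of E m a], of real] by simp
  also have "\<dots> \<le> (\<Sum>A\<in>?I a. ?C * ((if ?sparse A then 1 else 0) + ?E2))"
    using am mn t by (intro sum_mono card_indep_supersets_le_exp[OF sg]) auto
  also have "\<dots> = ?C * (real (card {A\<in>?I a. ?sparse A}) + real (card (?I a)) * ?E2)"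
    using finite_indep_sets[OF fV]
    by (simp add: sum_distrib_left[symmetric] sum.distrib distrib_left sum.If_cases Int_def)
  also have "\<dots> \<le> ?C * ?Y"
  proof -
    have "{A\<in>?I a. ?sparse A} \<subseteq> sparse_sets V E t a"
      by (auto simp: indep_sets_def sparse_sets_def independent_set_def)
    then have "card {A\<in>?I a. ?sparse A} \<le> card (sparse_sets V E t a)"
      using finite_sparse_sets[OF fV] by (rule card_mono[rotated])
    then show ?thesis
      using card_indep_sets_le[OF fV, of E a] by (intro mult_left_mono add_mono mult_right_mono) auto
  qed
  finally have main: "real (num_indep V E m) * real (m choose a) \<le> ?C * ?Y"
    by (simp add: num_indep_eq_card)
  have cm: "real (?n choose a) * ?C = real (?n choose m) * real (m choose a)"
    using choose_mult[of a m ?n] am mn by (metis less_imp_le of_nat_mult)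
  have "real (num_indep V E m) * real (?n choose a) * real (m choose a)
          = real (?n choose a) * (real (num_indep V E m) * real (m choose a))"
    by (simp only: mult_ac)
  also have "\<dots> \<le> real (?n choose a) * (?C * ?Y)"
    using main by (rule mult_left_mono) simp
  also have "\<dots> = real (?n choose m) * ?Y * real (m choose a)"
    by (simp only: mult.assoc[symmetric] cm) (simp only: mult_ac)
  finally have "real (num_indep V E m) * real (?n choose a) * real (m choose a)
                  \<le> real (?n choose m) * ?Y * real (m choose a)" .
  then show ?thesis using am by simp
qed

lemma num_indep_le_exp_sum:
  assumes sg: "simple_graph V E" and md: "max_degree_le V E d" and d: "d > 0" and \<beta>: "\<beta> > 0"
    and edges: "4 * \<beta> * real d * real (card V) \<le> real (card E)"
    and am: "a < m" and mn: "m \<le> card V" and t: "0 \<le> t" "t \<le> 4 * \<beta> * real (card V)"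
  shows "real (num_indep V E m) \<le> real (card V choose m)
           * (exp (6 * t / (\<beta> * real d) - 3 * \<beta> * real a) + exp (- t * real (m - a) / real (card V)))"
proof -
  let ?n = "card V"
  let ?X = "exp (6 * t / (\<beta> * real d) - 3 * \<beta> * real a)" and ?E2 = "exp (- t * real (m - a) / real ?n)"
  have "real (num_indep V E m) * real (?n choose a)
          \<le> real (?n choose m) * (real (card (sparse_sets V E t a)) + real (?n choose a) * ?E2)"
    by (rule num_indep_times_binomial_le[OF sg am mn t(1)])
  also have "\<dots> \<le> real (?n choose m) * (real (?n choose a) * ?X + real (?n choose a) * ?E2)"
    using card_sparse_sets_le_exp[OF sg md d \<beta> _ edges t, of a] am mn
    by (intro mult_left_mono add_mono) auto
  also have "\<dots> = real (?n choose m) * (?X + ?E2) * real (?n choose a)"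
    by (simp add: algebra_simps)
  finally show ?thesis using am mn by simp
qed

lemma exp_le_half_exp: "x \<le> y - ln 2 \<Longrightarrow> exp x \<le> exp y / (2::real)"
  by (metis exp_diff exp_ln exp_le_cancel_iff zero_less_numeral)

lemma real_div2_bounds:
  shows "(real m - 1) / 2 \<le> real (m div 2)" and "real m / 2 \<le> real (m - m div 2)"
proof -
  have "m = 2 * (m div 2) + m mod 2" by simp
  then have "real m = 2 * real (m div 2) + real (m mod 2)"
    by (metis of_nat_add of_nat_mult of_nat_numeral)
  moreover have "real (m mod 2) \<le> 1" by simp
  ultimately show "(real m - 1) / 2 \<le> real (m div 2)" "real m / 2 \<le> real (m - m div 2)"
    by (simp_all add: of_nat_diff)
qed

lemma real_div2_product_ge:
  assumes "2 \<le> real m"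
  shows "(real m)\<^sup>2 / 8 \<le> real (m div 2) * real (m - m div 2)"
proof -
  have "(real m - 1) / 2 \<le> real (m div 2)" "real m / 2 \<le> real (m - m div 2)"
    by (rule real_div2_bounds)+
  then show ?thesis
    using mult_mono[of "real m / 4" "real (m div 2)" "real m / 2" "real (m - m div 2)"] assms
    by (simp add: power2_eq_square)
qed

lemma ln_2_le_mult_ln:
  fixes x n :: real
  assumes "1 \<le> x" "2 \<le> n"
  shows "ln 2 \<le> x * ln n"
proof -
  have "ln 2 \<le> ln n" using assms(2) by simp
  moreover have "0 < ln (2::real)" by simp
  ultimately show ?thesis using mult_right_mono[OF assms(1), of "ln n"] by linarith
qed

lemma ln_2_ge_half: "1 / 2 \<le> ln (2::real)"
proof -
  have "1 / 2 \<le> exp (- 1 / 2 :: real)" using exp_ge_add_one_self[of "- 1 / 2 :: real"] by simp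
  then have "exp (1 / 2 :: real) \<le> 2"
    by (simp add: exp_minus field_simps)
  then show ?thesis by (metis ln_exp ln_le_cancel_iff exp_gt_zero zero_less_numeral)
qed

lemma log_exponent_le_quarter:
  fixes n m d \<beta> C :: real
  assumes \<beta>: "\<beta> > 0" and d: "d > 0" and n: "n > 0" and m: "0 \<le> m" and C: "384 / \<beta>\<^sup>2 \<le> C"
    and m_sq: "C\<^sup>2 * (n * ln n) \<le> m\<^sup>2" and sparse: "d * m < 96 / \<beta> * n"
  shows "C * d * ln n \<le> \<beta> * m / 4"
proof -
  have "0 < 384 / \<beta>\<^sup>2" using \<beta> by simp
  then have C0: "C > 0" using C by linarith
  have "(C * (C * d * ln n)) * n = d * (C\<^sup>2 * (n * ln n))" by (simp add: power2_eq_square)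
  also have "\<dots> \<le> d * m\<^sup>2" using m_sq d by simp
  also have "\<dots> = (d * m) * m" by (simp add: power2_eq_square)
  also have "\<dots> \<le> (96 / \<beta> * n) * m" using sparse m by (intro mult_right_mono) auto
  finally have "(C * (C * d * ln n)) * n \<le> (96 / \<beta> * m) * n" by (simp only: mult_ac)
  then have "C * (C * d * ln n) \<le> 96 / \<beta> * m" using n by (rule mult_right_le_imp_le)
  also have "\<dots> = 384 / \<beta>\<^sup>2 * (\<beta> * m / 4)" using \<beta> by (simp add: field_simps power2_eq_square)
  also have "\<dots> \<le> C * (\<beta> * m / 4)" using C \<beta> m by (intro mult_right_mono) auto
  finally show ?thesis using C0 by simp
qed

lemma num_indep_le_exp_dense:
  assumes sg: "simple_graph V E" and md: "max_degree_le V E d" and d: "d > 0" and \<beta>: "\<beta> > 0"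
    and edges: "4 * \<beta> * real d * real (card V) \<le> real (card E)"
    and mn: "m \<le> card V" and m: "6 + 4 / \<beta> \<le> real m"
    and dense: "96 / \<beta> * real (card V) \<le> real d * real m"
  shows "real (num_indep V E m) \<le> real (card V choose m) * exp (- \<beta> * real m)"
proof -
  let ?n = "card V" and ?a = "m div 2"
  let ?t = "4 * \<beta> * real ?n"
  have "0 < 4 / \<beta>" using \<beta> by simp
  then have m6: "6 \<le> real m" using m by linarith
  then have am: "?a < m" by simp
  have n: "0 < real ?n" using am mn by simp
  have a: "(real m - 1) / 2 \<le> real ?a" "real m / 2 \<le> real (m - ?a)" by (rule real_div2_bounds)+
  have \<beta>m: "6 * \<beta> + 4 \<le> \<beta> * real m" using m \<beta> by (simp add: field_simps)
  have "6 * ?t / (\<beta> * real d) \<le> \<beta> * real m / 4"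
    using dense \<beta> d by (simp add: field_simps)
  moreover have "3 * \<beta> * ((real m - 1) / 2) \<le> 3 * \<beta> * real ?a"
    using a(1) \<beta> by (intro mult_left_mono) auto
  ultimately have "6 * ?t / (\<beta> * real d) - 3 * \<beta> * real ?a \<le> - \<beta> * real m - ln 2"
    using \<beta>m ln_2_less_1 by (simp add: algebra_simps)
  then have x1: "exp (6 * ?t / (\<beta> * real d) - 3 * \<beta> * real ?a) \<le> exp (- \<beta> * real m) / 2"
    by (rule exp_le_half_exp)
  have "\<beta> * real m \<le> \<beta> * (2 * real (m - ?a))"
    using a(2) \<beta> by (intro mult_left_mono) auto
  then have "\<beta> * real m \<le> 2 * (\<beta> * real (m - ?a))" by (simp only: mult.left_commute)
  have "- ?t * real (m - ?a) / real ?n = - (4 * (\<beta> * real (m - ?a)))" using n by simp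
  also have "\<dots> \<le> - \<beta> * real m - ln 2"
    using \<open>\<beta> * real m \<le> 2 * (\<beta> * real (m - ?a))\<close> \<beta> \<beta>m ln_2_less_1 by linarith
  finally have x2: "exp (- ?t * real (m - ?a) / real ?n) \<le> exp (- \<beta> * real m) / 2"
    by (rule exp_le_half_exp)
  have "real (num_indep V E m) \<le> real (?n choose m)
          * (exp (6 * ?t / (\<beta> * real d) - 3 * \<beta> * real ?a) + exp (- ?t * real (m - ?a) / real ?n))"
    by (rule num_indep_le_exp_sum[OF sg md d \<beta> edges am mn]) (use \<beta> in simp_all)
  also have "\<dots> \<le> real (?n choose m) * exp (- \<beta> * real m)"
    using x1 x2 by (intro mult_left_mono) auto
  finally show ?thesis .
qed

lemma log_exponent_le_product:
  fixes n m d \<beta> C a b :: real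
  assumes \<beta>: "\<beta> > 0" and d: "d > 0" and n: "1 \<le> n" and C: "384 / \<beta>\<^sup>2 \<le> C"
    and ab: "m\<^sup>2 / 8 \<le> a * b" and m_sq: "C\<^sup>2 * (n * ln n) \<le> m\<^sup>2"
  shows "2 * (C * d * ln n) * n \<le> \<beta>\<^sup>2 / 24 * d * a * b"
proof -
  let ?c = "\<beta>\<^sup>2 / 24"
  have c: "0 < ?c" using \<beta> by simp
  have "0 < 384 / \<beta>\<^sup>2" using \<beta> by simp
  then have "0 \<le> C" using C by linarith
  moreover have "0 \<le> ln n" using n by simp
  ultimately have "0 \<le> C * d * ln n * n" using d n by simp
  moreover have "2 \<le> ?c * C / 8"
    using mult_left_mono[OF C, of ?c] \<beta> by (simp add: field_simps power2_eq_square)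
  ultimately have "2 * (C * d * ln n * n) \<le> (?c * C / 8) * (C * d * ln n * n)"
    by (intro mult_right_mono)
  then have "2 * (C * d * ln n) * n \<le> (?c * C / 8) * (C * d * ln n) * n"
    by (simp only: mult.assoc)
  also have "\<dots> = ?c * d * (C\<^sup>2 * (n * ln n) / 8)" by (simp add: power2_eq_square)
  also have "\<dots> \<le> ?c * d * (m\<^sup>2 / 8)" using m_sq c d by (intro mult_left_mono) auto
  also have "\<dots> \<le> ?c * d * (a * b)" using ab c d by (intro mult_left_mono) auto
  finally show ?thesis by (simp add: mult.assoc)
qed

lemma num_indep_le_powr_sparse:
  assumes sg: "simple_graph V E" and md: "max_degree_le V E d" and d: "d > 0" and \<beta>: "\<beta> > 0"
    and edges: "4 * \<beta> * real d * real (card V) \<le> real (card E)"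
    and mn: "m \<le> card V" and n: "2 \<le> card V" and C: "384 / \<beta>\<^sup>2 \<le> C" "1 \<le> C"
    and m: "2 + 1 / \<beta> \<le> real m" and m_sq: "C\<^sup>2 * (real (card V) * ln (real (card V))) \<le> (real m)\<^sup>2"
    and sparse: "real d * real m < 96 / \<beta> * real (card V)"
  shows "real (num_indep V E m) \<le> real (card V choose m) * real (card V) powr (- C * real d)"
proof -
  let ?n = "card V" and ?a = "m div 2"
  define c where "c = \<beta>\<^sup>2 / 24"
  define t where "t = c * real d * real ?a"
  define L where "L = C * real d * ln (real ?n)"
  have c: "c > 0" using \<beta> by (simp add: c_def)
  have "0 < 1 / \<beta>" using \<beta> by simp
  then have m2: "2 \<le> real m" using m by linarith
  then have am: "?a < m" by simp
  have a: "(real m - 1) / 2 \<le> real ?a" by (rule real_div2_bounds)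
  have "1 \<le> C * real d" using mult_mono[of 1 C 1 "real d"] C(2) d by simp
  then have L_ge: "ln 2 \<le> L" using ln_2_le_mult_ln[of "C * real d" "real ?n"] n by (simp add: L_def)
  have L_le: "L \<le> \<beta> * real m / 4"
    unfolding L_def using n d by (intro log_exponent_le_quarter[OF \<beta> _ _ _ C(1) m_sq sparse]) auto
  have t: "0 \<le> t" "t \<le> 4 * \<beta> * real ?n"
  proof -
    show "0 \<le> t" using c by (simp add: t_def)
    have "t \<le> c * (real d * real m)" unfolding t_def using c by (simp add: mult_left_mono)
    also have "\<dots> \<le> c * (96 / \<beta> * real ?n)" using sparse c by (intro mult_left_mono) auto
    also have "\<dots> = 4 * \<beta> * real ?n" using \<beta> by (simp add: c_def field_simps power2_eq_square)
    finally show "t \<le> 4 * \<beta> * real ?n" .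
  qed
  have "6 * t / (\<beta> * real d) - 3 * \<beta> * real ?a = - (11 / 4) * \<beta> * real ?a"
    using \<beta> d by (simp add: t_def c_def field_simps power2_eq_square)
  also have "\<dots> \<le> - (11 / 8) * \<beta> * (real m - 1)" using a(1) \<beta> by simp
  also have "\<dots> \<le> - L - ln 2"
    using L_le ln_2_less_1 m \<beta> by (simp add: field_simps)
  finally have x1: "exp (6 * t / (\<beta> * real d) - 3 * \<beta> * real ?a) \<le> exp (- L) / 2"
    by (rule exp_le_half_exp)
  from m2 have "(real m)\<^sup>2 / 8 \<le> real ?a * real (m - ?a)" by (rule real_div2_product_ge)
  then have "2 * L * real ?n \<le> t * real (m - ?a)"
    unfolding L_def t_def c_def using n by (intro log_exponent_le_product[OF \<beta> _ _ C(1) _ m_sq]) (use d in simp_all)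
  moreover have "(L + ln 2) * real ?n \<le> 2 * L * real ?n" using L_ge by (intro mult_right_mono) auto
  ultimately have "(L + ln 2) * real ?n \<le> t * real (m - ?a)" by linarith
  then have "- t * real (m - ?a) / real ?n \<le> - L - ln 2"
    using n by (simp add: field_simps)
  then have x2: "exp (- t * real (m - ?a) / real ?n) \<le> exp (- L) / 2"
    by (rule exp_le_half_exp)
  have "real (num_indep V E m) \<le> real (?n choose m)
          * (exp (6 * t / (\<beta> * real d) - 3 * \<beta> * real ?a) + exp (- t * real (m - ?a) / real ?n))"
    by (rule num_indep_le_exp_sum[OF sg md d \<beta> edges am mn t])
  also have "\<dots> \<le> real (?n choose m) * exp (- L)"
    using x1 x2 by (intro mult_left_mono) auto
  also have "exp (- L) = real ?n powr (- C * real d)"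
    using n unfolding L_def powr_def by simp
  finally show ?thesis .
qed

lemma num_indep_le_binomial: "finite V \<Longrightarrow> num_indep V E m \<le> card V choose m"
  by (simp add: num_indep_eq_card card_indep_sets_le)

lemma num_indep_le_edgeless:
  assumes sg: "simple_graph V E" and \<beta>: "\<beta> > 0" and E: "E = {}"
    and edges: "4 * \<beta> * real d * real (card V) \<le> real (card E)"
  shows "real (num_indep V E m)
           \<le> (real (card V) powr (- C * real d) + exp (- \<beta> * real m)) * real (card V choose m)"
proof -
  have "card V choose m = 0 \<or> 1 \<le> real (card V) powr (- C * real d) + exp (- \<beta> * real m)"
  proof (cases "card V = 0")
    case True
    then show ?thesis by (cases m) auto
  next
    case False
    then have "d = 0" using edges E \<beta> by (simp add: mult_le_0_iff)
    then show ?thesis using False by simp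
  qed
  then have "real (card V choose m) \<le> (real (card V) powr (- C * real d) + exp (- \<beta> * real m)) * real (card V choose m)"
    by (auto intro: mult_le_cancel_right1[THEN iffD2])
  then show ?thesis
    using num_indep_le_binomial[of V E m] sg by (simp add: simple_graph_def)
qed

lemma edge_imp_degree_pos_card_ge_2:
  assumes sg: "simple_graph V E" and md: "max_degree_le V E d" and E: "E \<noteq> {}"
  shows "0 < d" and "2 \<le> card V"
proof -
  obtain e where e: "e \<in> E" using E by blast
  then have eV: "e \<subseteq> V" "card e = 2" using sg by (auto simp: simple_graph_def)
  then show "2 \<le> card V" using sg card_mono[of V e] by (simp add: simple_graph_def)
  obtain v where "v \<in> e" using eV(2) by (auto simp: card_2_iff)
  then have "1 \<le> degree E v" "v \<in> V"
    using e eV sg simple_graph_finite_edges[OF sg] by (auto simp: degree_def card_gt_0_iff Suc_le_eq)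
  then show "0 < d" using md by (auto simp: max_degree_le_def)
qed

lemma num_indep_le_nonempty_edges:
  assumes sg: "simple_graph V E" and md: "max_degree_le V E d" and \<beta>: "\<beta> > 0" and E: "E \<noteq> {}"
    and edges: "4 * \<beta> * real d * real (card V) \<le> real (card E)"
    and mn: "m \<le> card V" and C: "384 / \<beta>\<^sup>2 + 4 / \<beta> + 6 \<le> C"
    and m: "C * sqrt (real (card V) * ln (real (card V))) \<le> real m"
  shows "real (num_indep V E m)
           \<le> (real (card V) powr (- C * real d) + exp (- \<beta> * real m)) * real (card V choose m)"
proof -
  let ?n = "card V"
  have d: "d > 0" and n: "2 \<le> ?n" using edge_imp_degree_pos_card_ge_2[OF sg md E] by auto
  have "ln 2 \<le> ln (real ?n)" using n by simp
  then have "1 / 2 \<le> ln (real ?n)" using ln_2_ge_half by linarith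
  then have "1 \<le> real ?n * ln (real ?n)"
    using mult_mono[of 2 "real ?n" "1 / 2" "ln (real ?n)"] n by simp
  then have sqrt_ge: "1 \<le> sqrt (real ?n * ln (real ?n))" by simp
  have pos: "0 < 384 / \<beta>\<^sup>2" "0 < 4 / \<beta>" using \<beta> by simp_all
  then have C_pos: "0 < C" using C by linarith
  have "C * 1 \<le> C * sqrt (real ?n * ln (real ?n))" using sqrt_ge C_pos by (intro mult_left_mono) auto
  then have "C \<le> real m" using m by simp
  have m_sq: "C\<^sup>2 * (real ?n * ln (real ?n)) \<le> (real m)\<^sup>2"
    using power_mono[OF m, of 2] C_pos sqrt_ge by (simp add: power_mult_distrib)
  have "1 / \<beta> \<le> 4 / \<beta>" using \<beta> by (simp add: divide_right_mono)
  then have m_ge: "6 + 4 / \<beta> \<le> real m" "2 + 1 / \<beta> \<le> real m"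
    using \<open>C \<le> real m\<close> C pos by linarith+
  have C_ge: "384 / \<beta>\<^sup>2 \<le> C" "1 \<le> C" using C pos by linarith+
  show ?thesis
  proof (cases "96 / \<beta> * real ?n \<le> real d * real m")
    case True
    then have "real (num_indep V E m) \<le> real (?n choose m) * exp (- \<beta> * real m)"
      by (rule num_indep_le_exp_dense[OF sg md d \<beta> edges mn m_ge(1)])
    then have "real (num_indep V E m) \<le> exp (- \<beta> * real m) * real (?n choose m)"
      by (simp only: mult.commute)
    moreover have "0 \<le> real ?n powr (- C * real d) * real (?n choose m)" by simp
    ultimately show ?thesis unfolding distrib_right by linarith
  next
    case False
    have "real (num_indep V E m) \<le> real (?n choose m) * real ?n powr (- C * real d)"
      using False by (intro num_indep_le_powr_sparse[OF sg md d \<beta> edges mn n C_ge m_ge(2) m_sq]) simp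
    then have "real (num_indep V E m) \<le> real ?n powr (- C * real d) * real (?n choose m)"
      by (simp only: mult.commute)
    moreover have "0 \<le> exp (- \<beta> * real m) * real (?n choose m)" by simp
    ultimately show ?thesis unfolding distrib_right by linarith
  qed
qed

theorem lemma5p5:
  fixes \<beta> :: real
  assumes "\<beta> > 0"
  shows "\<exists>C0 > 0. \<forall>(V :: nat set) (E :: nat set set) (n :: nat) (d :: nat).
           simple_graph V E \<longrightarrow> card V = n \<longrightarrow> max_degree_le V E d \<longrightarrow>
           real (num_edges E) \<ge> 4 * \<beta> * real d * real n \<longrightarrow>
           (\<forall>C :: real. C \<ge> C0 \<longrightarrow> (\<forall>m :: nat. real m \<ge> C * sqrt (real n * ln (real n)) \<longrightarrow>
              real (num_indep V E m) \<le>
                (real n powr (- C * real d) + exp (- \<beta> * real m)) * real (n choose m)))"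
proof (intro exI[of _ "384 / \<beta>\<^sup>2 + 4 / \<beta> + 6"] conjI allI impI)
  show "0 < 384 / \<beta>\<^sup>2 + 4 / \<beta> + 6" using assms by (simp add: add_pos_pos)
next
  fix V :: "nat set" and E :: "nat set set" and n d :: nat and C :: real and m :: nat
  assume sg: "simple_graph V E" and n: "card V = n" and md: "max_degree_le V E d"
    and edges: "4 * \<beta> * real d * real n \<le> real (num_edges E)"
    and C: "384 / \<beta>\<^sup>2 + 4 / \<beta> + 6 \<le> C" and m: "C * sqrt (real n * ln (real n)) \<le> real m"
  consider "E = {}" | "n < m" | "E \<noteq> {}" "m \<le> n" by fastforce
  then show "real (num_indep V E m) \<le> (real n powr (- C * real d) + exp (- \<beta> * real m)) * real (n choose m)"
  proof cases
    case 1
    then show ?thesis using num_indep_le_edgeless[OF sg assms] edges n by (simp add: num_edges_def)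
  next
    case 2
    then show ?thesis using num_indep_le_binomial[of V E m] sg n by (simp add: simple_graph_def binomial_eq_0)
  next
    case 3
    then show ?thesis
      using num_indep_le_nonempty_edges[OF sg md assms _ _ _ C] edges m n by (simp add: num_edges_def)
  qed
qed

end
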